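(* Let $(X_t)_{t\ge0}$ be the continuous-time random walk on $\mathbb{Z}$ started at $0$ with generator $(Lf)(x)=\frac12\left(f(x+1)-f(x)\right)+\frac12\left(f(x-1)-f(x)\right)$. Then there is a universal constant $c>0$ such that for all $t\ge0$, $\mathrm{Varent}(X_t)\ge c\,\mathcal{V}(t)$, where $\mathcal{V}(t)=t\log^2\!\left(1+\frac1{\sqrt t}\right)$ (and $\mathcal{V}(0)=0$).
   Context: For a discrete random variable $X$ with probability mass function $f$, $\mathrm{Varent}(X):=\mathrm{Var}(\log f(X))$. *)

theory Defs
  imports "HOL-Probability.Probability"
begin

definition varent :: "'a pmf \<Rightarrow> real" where
  "varent p = measure_pmf.variance p (\<lambda>x. ln (pmf p x))"

text \<open>Up-jumps and down-jumps occur according to independent Poisson processes of rate 1/2,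
  so X_t = N_up(t) - N_down(t) with N_up(t), N_down(t) independent Poisson(t/2);
  at t = 0 the walk is at 0.\<close>
definition srw_law :: "real \<Rightarrow> int pmf" where
  "srw_law t = (if t \<le> 0 then return_pmf 0
     else map_pmf (\<lambda>(a, b). int a - int b)
            (pair_pmf (poisson_pmf (t / 2)) (poisson_pmf (t / 2))))"

definition V_rate :: "real \<Rightarrow> real" where
  "V_rate t = (if t = 0 then 0 else t * (ln (1 + 1 / sqrt t))\<^sup>2)"

end

theory Submission
  imports Defs
begin

(* X_t is the difference of two independent Poisson(t/2) variables, so its law f is symmetric,
   f(k) = f(-k) = s_k = sum_j pi(j + k) pi(j) with pi the Poisson(t/2) weights.  Termwise
   AM-GM shows that s_k is nonincreasing, and the s_k satisfy the Bessel-type recurrence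
   (k + 1) s_(k+1) = (t/2) (s_k - s_(k+2)).  The variance of ln f(X) is at least
   min(P(A), P(B)) (ln g / 2)^2 whenever every value of f on A is at least g times every value
   of f on B.
   For t <= 1 take A = {0}, B = {1}: the recurrence gives s_1 <= (t/2) s_0 and both points have mass
   of order t, so Varent(X_t) >= c t ln^2(2/t) >= c V(t).
   For t >= 1 take n ~ sqrt t: iterating the recurrence gives s_(3n) <= s_n / 3 and
   s_k >= exp(-k^2/(t/2)) s_0, and Chebyshev's inequality puts half of the mass in [-4n, 4n], where
   f <= s_0, so s_0 >= c / n.  Hence A = [0, n] and B = [3n, 4n] both have mass bounded below, and
   Varent(X_t) is bounded below by a constant, while V(t) <= 1. *)

section \<open>Poisson weights\<close>

definition poisson_density :: "real \<Rightarrow> nat \<Rightarrow> real" where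
  "poisson_density r n = r ^ n / fact n * exp (- r)"

lemma pmf_poisson_density: "0 < r \<Longrightarrow> pmf (poisson_pmf r) n = poisson_density r n"
  by (simp add: poisson_density_def)

lemma poisson_density_pos: "0 < r \<Longrightarrow> 0 < poisson_density r n"
  by (simp add: poisson_density_def)

lemma poisson_density_le_1: "0 < r \<Longrightarrow> poisson_density r n \<le> 1"
  by (metis pmf_le_1 pmf_poisson_density)

lemma poisson_density_Suc: "poisson_density r (Suc n) = poisson_density r n * r / real (Suc n)"
  by (simp add: poisson_density_def field_simps)

lemma of_nat_Suc_mult_poisson_density:
  "real (Suc n) * poisson_density r (Suc n) = r * poisson_density r n"
  by (simp add: poisson_density_Suc)

lemma poisson_density_sums: "poisson_density r sums 1"
proof -
  have "(\<lambda>n. r ^ n / fact n) sums exp r"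
    using exp_converges[of r] by (simp add: divide_inverse mult.commute)
  then have "(\<lambda>n. r ^ n / fact n * exp (- r)) sums (exp r * exp (- r))"
    by (rule sums_mult2)
  then show ?thesis
    by (simp add: poisson_density_def[abs_def] mult_exp_exp)
qed

lemma summable_poisson_density: "summable (poisson_density r)"
  using poisson_density_sums sums_summable by blast

lemma poisson_density_sums_mean: "(\<lambda>n. real n * poisson_density r n) sums r"
proof -
  have "(\<lambda>n. real (Suc n) * poisson_density r (Suc n)) sums (r * 1)"
    unfolding of_nat_Suc_mult_poisson_density by (rule sums_mult[OF poisson_density_sums])
  then show ?thesis
    by (subst (asm) sums_Suc_iff) simp
qed

lemma poisson_density_sums_second_moment:
  "(\<lambda>n. (real n)\<^sup>2 * poisson_density r n) sums (r\<^sup>2 + r)"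
proof -
  have "(\<lambda>n. r * (real n * poisson_density r n + poisson_density r n)) sums (r * (r + 1))"
    by (intro sums_mult sums_add poisson_density_sums_mean poisson_density_sums)
  moreover have "(real (Suc n))\<^sup>2 * poisson_density r (Suc n)
      = r * (real n * poisson_density r n + poisson_density r n)" for n
  proof -
    have "(real (Suc n))\<^sup>2 * poisson_density r (Suc n)
        = real (Suc n) * (real (Suc n) * poisson_density r (Suc n))"
      by (simp add: power2_eq_square)
    then show ?thesis
      by (simp only: of_nat_Suc_mult_poisson_density) (simp add: algebra_simps)
  qed
  ultimately have "(\<lambda>n. (real (Suc n))\<^sup>2 * poisson_density r (Suc n)) sums (r\<^sup>2 + r)"
    by (simp add: power2_eq_square algebra_simps)
  then show ?thesis
    by (subst (asm) sums_Suc_iff) simp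
qed

lemma poisson_density_sums_variance: "(\<lambda>n. poisson_density r n * (real n - r)\<^sup>2) sums r"
proof -
  have "(\<lambda>n. (real n)\<^sup>2 * poisson_density r n - 2 * r * (real n * poisson_density r n)
          + r\<^sup>2 * poisson_density r n) sums (r\<^sup>2 + r - 2 * r * r + r\<^sup>2 * 1)"
    by (intro sums_add sums_diff sums_mult poisson_density_sums_second_moment
          poisson_density_sums_mean poisson_density_sums)
  then show ?thesis
    by (simp add: power2_eq_square algebra_simps)
qed

lemma measure_poisson_pmf_deviation_le:
  assumes r: "0 < r" and \<rho>: "0 < \<rho>"
  shows "measure (poisson_pmf r) {a. \<rho> < \<bar>real a - r\<bar>} \<le> r / \<rho>\<^sup>2"
proof -
  let ?g = "\<lambda>n. poisson_density r n * (real n - r)\<^sup>2 / \<rho>\<^sup>2"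
  have g_sums: "?g sums (r / \<rho>\<^sup>2)"
    by (rule sums_divide[OF poisson_density_sums_variance])
  have g_nonneg: "0 \<le> ?g n" for n
    using poisson_density_pos[OF r, of n] by simp
  have g_abs_summable: "Infinite_Set_Sum.abs_summable_on ?g UNIV"
  proof -
    have "(\<lambda>n. norm (?g n)) = ?g"
      using g_nonneg by (intro ext) (simp only: real_norm_def abs_of_nonneg)
    then show ?thesis
      unfolding abs_summable_on_nat_iff' using sums_summable[OF g_sums] by simp
  qed
  have "measure (poisson_pmf r) {a. \<rho> < \<bar>real a - r\<bar>}
      = infsetsum (pmf (poisson_pmf r)) {a. \<rho> < \<bar>real a - r\<bar>}"
    by (rule measure_pmf_conv_infsetsum)
  also have "\<dots> \<le> infsetsum ?g UNIV"
  proof (rule infsetsum_mono_neutral_left[OF pmf_abs_summable g_abs_summable])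
    fix a assume "a \<in> {a. \<rho> < \<bar>real a - r\<bar>}"
    then have "1 \<le> (real a - r)\<^sup>2 / \<rho>\<^sup>2"
      using \<rho> by (simp add: abs_le_square_iff[symmetric] less_imp_le)
    then have "poisson_density r a * 1 \<le> poisson_density r a * ((real a - r)\<^sup>2 / \<rho>\<^sup>2)"
      using poisson_density_pos[OF r, of a] by (intro mult_left_mono) auto
    then show "pmf (poisson_pmf r) a \<le> ?g a"
      by (subst pmf_poisson_density[OF r]) simp
  qed (use g_nonneg in auto)
  also have "\<dots> = r / \<rho>\<^sup>2"
    using infsetsum_nat'[OF g_abs_summable] g_sums by (simp add: sums_iff)
  finally show ?thesis .
qed

lemma integrable_poisson_pmf_exp:
  assumes r: "0 < r"
  shows "integrable (poisson_pmf r) (\<lambda>n. exp (c * real n))"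
proof -
  have r': "0 < exp c * r"
    using r by simp
  have "pmf (poisson_pmf r) n * exp (c * real n)
      = poisson_density (exp c * r) n * exp (exp c * r - r)" for n
  proof -
    have "exp (c * real n) = exp c ^ n"
      by (simp add: exp_of_nat_mult[symmetric] mult.commute)
    then show ?thesis
      using r by (simp add: poisson_density_def power_mult_distrib exp_diff exp_minus field_simps)
  qed
  moreover have "summable (\<lambda>n. poisson_density (exp c * r) n * exp (exp c * r - r))"
    by (rule summable_mult2[OF summable_poisson_density])
  ultimately have
    "Infinite_Set_Sum.abs_summable_on (\<lambda>n. pmf (poisson_pmf r) n * exp (c * real n)) UNIV"
    using poisson_density_pos[OF r'] by (simp add: abs_summable_on_nat_iff' less_imp_le)
  then show ?thesis
    by (simp add: measure_pmf_eq_density integrable_density abs_summable_on_def)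
qed

lemma ln_fact_le_square: "ln (fact n) \<le> real n * real n"
proof (cases "n = 0")
  case False
  then have n: "0 < real n"
    by simp
  have "ln (fact n) \<le> ln (real (n ^ n))"
    using fact_le_power[of n, where 'a = real] by (subst ln_le_cancel_iff) auto
  also have "\<dots> = real n * ln (real n)"
    by (simp add: ln_realpow n)
  also have "\<dots> \<le> real n * real n"
    using n ln_le_minus_one[OF n] by (intro mult_left_mono) auto
  finally show ?thesis .
qed simp

lemma abs_ln_poisson_density_le:
  assumes r: "0 < r"
  shows "\<bar>ln (poisson_density r n)\<bar> \<le> (r + \<bar>ln r\<bar> + 2) * exp (real n)"
proof -
  have "ln (poisson_density r n) = real n * ln r - ln (fact n) - r"
    using r by (simp add: poisson_density_def ln_mult ln_div ln_realpow)
  moreover have "0 \<le> ln (fact n :: real)"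
    by (rule ln_ge_zero) simp
  ultimately have "\<bar>ln (poisson_density r n)\<bar> \<le> real n * \<bar>ln r\<bar> + ln (fact n) + r"
    using r abs_mult[of "real n" "ln r"] by linarith
  also have "\<dots> \<le> exp (real n) * \<bar>ln r\<bar> + 2 * exp (real n) + r * exp (real n)"
  proof (intro add_mono mult_right_mono)
    show "real n \<le> exp (real n)"
      using exp_ge_add_one_self[of "real n"] by linarith
    show "ln (fact n) \<le> 2 * exp (real n)"
      using ln_fact_le_square[of n] exp_lower_Taylor_quadratic[of "real n"]
      by (simp add: power2_eq_square)
    show "r \<le> r * exp (real n)"
      using r by simp
  qed simp
  also have "\<dots> = (r + \<bar>ln r\<bar> + 2) * exp (real n)"
    by (simp add: algebra_simps)
  finally show ?thesis .
qed

section \<open>The symmetric Skellam distribution\<close>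

definition skellam_pmf :: "real \<Rightarrow> int pmf" where
  "skellam_pmf r = map_pmf (\<lambda>(a, b). int a - int b) (pair_pmf (poisson_pmf r) (poisson_pmf r))"

definition skellam_density :: "real \<Rightarrow> nat \<Rightarrow> real" where
  "skellam_density r k = (\<Sum>j. poisson_density r (j + k) * poisson_density r j)"

lemma srw_law_eq_skellam_pmf: "0 < t \<Longrightarrow> srw_law t = skellam_pmf (t / 2)"
  by (simp add: srw_law_def skellam_pmf_def)

lemma summable_skellam_density:
  assumes r: "0 < r"
  shows "summable (\<lambda>j. poisson_density r (j + k) * poisson_density r j)"
proof (rule summable_comparison_test'[OF summable_poisson_density])
  show "norm (poisson_density r (j + k) * poisson_density r j) \<le> poisson_density r j" for j
    using poisson_density_le_1[OF r, of "j + k"] poisson_density_pos[OF r, of j]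
      poisson_density_pos[OF r, of "j + k"]
    by (simp add: mult_left_le_one_le)
qed

lemma pmf_skellam_pmf_of_nat:
  assumes r: "0 < r"
  shows "pmf (skellam_pmf r) (int k) = skellam_density r k"
proof -
  have preimage: "(\<lambda>(a, b). int a - int b) -` {int k} = range (\<lambda>j. (j + k, j))"
    by (auto simp: image_def)
  have inj: "inj (\<lambda>j. (j + k, j))"
    by (auto simp: inj_def)
  have "pmf (skellam_pmf r) (int k)
      = measure (pair_pmf (poisson_pmf r) (poisson_pmf r)) (range (\<lambda>j. (j + k, j)))"
    by (simp add: skellam_pmf_def pmf_map preimage)
  also have "\<dots> = infsetsum (\<lambda>j. poisson_density r (j + k) * poisson_density r j) UNIV"
    using r by (simp add: measure_pmf_conv_infsetsum infsetsum_reindex[OF inj] comp_def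
        pmf_pair pmf_poisson_density del: pmf_poisson)
  also have "\<dots> = skellam_density r k"
    unfolding skellam_density_def
    by (rule infsetsum_nat')
      (use summable_skellam_density[OF r, of k] poisson_density_pos[OF r] in
        \<open>simp add: abs_summable_on_nat_iff' abs_mult less_imp_le\<close>)
  finally show ?thesis .
qed

lemma map_pmf_uminus_skellam_pmf: "map_pmf uminus (skellam_pmf r) = skellam_pmf r"
proof -
  let ?P = "pair_pmf (poisson_pmf r) (poisson_pmf r)"
  have "map_pmf uminus (skellam_pmf r) = map_pmf (\<lambda>(a, b). int b - int a) ?P"
    by (simp add: skellam_pmf_def map_pmf_comp case_prod_unfold)
  also have "\<dots> = skellam_pmf r"
    by (subst pair_commute_pmf) (simp add: skellam_pmf_def map_pmf_comp case_prod_unfold)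
  finally show ?thesis .
qed

lemma pmf_skellam_pmf:
  assumes r: "0 < r"
  shows "pmf (skellam_pmf r) x = skellam_density r (nat \<bar>x\<bar>)"
proof (cases "0 \<le> x")
  case True
  then show ?thesis
    using pmf_skellam_pmf_of_nat[OF r, of "nat x"] by simp
next
  case False
  have "pmf (skellam_pmf r) x = pmf (map_pmf uminus (skellam_pmf r)) (- (- x))"
    by (simp add: map_pmf_uminus_skellam_pmf)
  also have "\<dots> = pmf (skellam_pmf r) (int (nat (- x)))"
    using False by (subst pmf_map_inj') (auto intro: injI)
  also have "\<dots> = skellam_density r (nat (- x))"
    by (rule pmf_skellam_pmf_of_nat[OF r])
  finally show ?thesis
    using False by simp
qed

lemma pmf_skellam_pmf_ge:
  assumes r: "0 < r"
  shows "poisson_density r a * poisson_density r b \<le> pmf (skellam_pmf r) (int a - int b)"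
proof -
  have "poisson_density r a * poisson_density r b
      = measure (pair_pmf (poisson_pmf r) (poisson_pmf r)) {(a, b)}"
    using r by (simp add: measure_pmf_single pmf_pair pmf_poisson_density del: pmf_poisson)
  also have "\<dots> \<le> measure (pair_pmf (poisson_pmf r) (poisson_pmf r))
      ((\<lambda>(a, b). int a - int b) -` {int a - int b})"
    by (intro measure_pmf.finite_measure_mono) auto
  also have "\<dots> = pmf (skellam_pmf r) (int a - int b)"
    by (simp add: skellam_pmf_def pmf_map)
  finally show ?thesis .
qed

lemma skellam_density_pos: "0 < r \<Longrightarrow> 0 < skellam_density r k"
  unfolding skellam_density_def
  by (rule suminf_pos[OF summable_skellam_density]) (auto intro: mult_pos_pos poisson_density_pos)

lemma poisson_density_shift_le_mean:
  assumes r: "0 < r"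
  shows "poisson_density r (j + Suc k) * poisson_density r j
    \<le> (poisson_density r (j + k) * poisson_density r j
        + poisson_density r (Suc j + k) * poisson_density r (Suc j)) / 2"
proof -
  define A where "A = poisson_density r (j + k) * poisson_density r j"
  define m where "m = real (j + k + 1)"
  define d where "d = real (j + 1)"
  have A: "0 < A"
    using poisson_density_pos[OF r] by (simp add: A_def)
  have md: "d \<le> m" "1 \<le> d"
    by (auto simp: m_def d_def)
  have "2 * r * d \<le> d * d + r\<^sup>2"
    using sum_squares_ge_zero[of "d - r" 0] by (simp add: power2_eq_square algebra_simps)
  also have "d * d \<le> m * d"
    using md by (intro mult_right_mono) auto
  finally have "r / m \<le> (1 + r\<^sup>2 / (m * d)) / 2"
    using md by (simp add: field_simps)
  then have "A * (r / m) \<le> A * ((1 + r\<^sup>2 / (m * d)) / 2)"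
    using A by (intro mult_left_mono) auto
  then show ?thesis
    by (simp add: A_def m_def d_def poisson_density_Suc power2_eq_square field_simps)
qed

lemma skellam_density_Suc_le:
  assumes r: "0 < r"
  shows "skellam_density r (Suc k) \<le> skellam_density r k"
proof -
  let ?f = "\<lambda>j. poisson_density r (j + Suc k) * poisson_density r j"
  let ?g = "\<lambda>j. poisson_density r (j + k) * poisson_density r j"
  let ?h = "\<lambda>j. ?g (Suc j)"
  have sf: "summable ?f" and sg: "summable ?g"
    using summable_skellam_density[OF r] by blast+
  have sh: "summable ?h"
    using sg by (subst summable_Suc_iff)
  have "skellam_density r (Suc k) = suminf ?f"
    by (simp add: skellam_density_def)
  also have "\<dots> \<le> suminf (\<lambda>j. (?g j + ?h j) / 2)"
    using poisson_density_shift_le_mean[OF r] sf sg sh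
    by (intro suminf_le) (auto intro!: summable_add summable_divide)
  also have "\<dots> = (suminf ?g + suminf ?h) / 2"
    using sg sh by (subst suminf_divide) (auto intro!: summable_add simp: suminf_add)
  also have "suminf ?h = suminf ?g - ?g 0"
    using suminf_split_head[OF sg] by simp
  also have "(suminf ?g + (suminf ?g - ?g 0)) / 2 \<le> suminf ?g"
    using poisson_density_pos[OF r] by (simp add: less_imp_le)
  finally show ?thesis
    by (simp add: skellam_density_def)
qed

lemma decseq_skellam_density: "0 < r \<Longrightarrow> decseq (skellam_density r)"
  by (intro decseq_SucI skellam_density_Suc_le)

lemma skellam_density_recurrence:
  assumes r: "0 < r"
  shows "real (Suc m) * skellam_density r (Suc m)
    = r * (skellam_density r m - skellam_density r (Suc (Suc m)))"
proof -
  let ?f = "\<lambda>j. poisson_density r (j + Suc m) * poisson_density r j"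
  let ?g = "\<lambda>j. poisson_density r (j + m) * poisson_density r j"
  let ?h = "\<lambda>j. poisson_density r (j + Suc (Suc m)) * poisson_density r j"
  define u where "u j = real j * poisson_density r j * poisson_density r (j + Suc m)" for j
  \<comment> \<open>split the weight \<open>m + 1 = (j + m + 1) - j\<close> and absorb each part by
    \<open>of_nat_Suc_mult_poisson_density\<close>\<close>
  have f_eq: "real (Suc m) * ?f j = r * ?g j - u j" for j
  proof -
    have "real (Suc m) * ?f j
        = real (Suc (j + m)) * poisson_density r (Suc (j + m)) * poisson_density r j - u j"
      by (simp add: u_def algebra_simps)
    then show ?thesis
      by (simp only: of_nat_Suc_mult_poisson_density)
  qed
  have u_Suc: "u (Suc i) = r * ?h i" for i
  proof -
    have "u (Suc i)
        = real (Suc i) * poisson_density r (Suc i) * poisson_density r (Suc (i + Suc m))"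
      by (simp add: u_def)
    then show ?thesis
      by (simp only: of_nat_Suc_mult_poisson_density) (simp add: algebra_simps)
  qed
  have sg: "summable ?g" and sh: "summable ?h"
    using summable_skellam_density[OF r] by blast+
  have su: "summable u"
    using summable_mult[OF sh, of r] unfolding u_Suc[symmetric]
    by (subst summable_Suc_iff[symmetric])
  have "u 0 = 0"
    by (simp add: u_def)
  then have sum_u: "suminf u = r * skellam_density r (Suc (Suc m))"
    using suminf_split_head[OF su] sh by (simp add: u_Suc suminf_mult skellam_density_def)
  have "real (Suc m) * skellam_density r (Suc m) = suminf (\<lambda>j. real (Suc m) * ?f j)"
    unfolding skellam_density_def using summable_skellam_density[OF r]
    by (rule suminf_mult[symmetric])
  also have "\<dots> = suminf (\<lambda>j. r * ?g j - u j)"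
    by (simp only: f_eq)
  also have "\<dots> = r * suminf ?g - suminf u"
    using sg su by (simp add: suminf_diff[symmetric] summable_mult suminf_mult)
  also have "\<dots> = r * (skellam_density r m - skellam_density r (Suc (Suc m)))"
    by (simp add: sum_u skellam_density_def algebra_simps)
  finally show ?thesis .
qed

lemma skellam_density_le_Suc:
  assumes r: "0 < r"
  shows "skellam_density r k \<le> (1 + real (Suc k) / r) * skellam_density r (Suc k)"
proof -
  have "r * skellam_density r k
      = r * skellam_density r (Suc (Suc k)) + real (Suc k) * skellam_density r (Suc k)"
    using skellam_density_recurrence[OF r, of k] by (simp add: algebra_simps)
  also have "\<dots> \<le> r * skellam_density r (Suc k) + real (Suc k) * skellam_density r (Suc k)"
    using skellam_density_Suc_le[OF r, of "Suc k"] r by simp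
  also have "\<dots> = r * ((1 + real (Suc k) / r) * skellam_density r (Suc k))"
    using r by (simp add: field_simps)
  finally show ?thesis
    using r by simp
qed

lemma skellam_density_Suc_Suc_le:
  assumes r: "0 < r"
  shows "(1 + real (Suc k) / r) * skellam_density r (Suc (Suc k)) \<le> skellam_density r k"
proof -
  have "real (Suc k) * skellam_density r (Suc (Suc k))
      \<le> real (Suc k) * skellam_density r (Suc k)"
    using skellam_density_Suc_le[OF r, of "Suc k"] by (intro mult_left_mono) auto
  also have "\<dots> = r * (skellam_density r k - skellam_density r (Suc (Suc k)))"
    by (rule skellam_density_recurrence[OF r])
  finally show ?thesis
    using r by (simp add: field_simps)
qed

lemma skellam_density_zero_le_exp:
  assumes r: "0 < r"
  shows "skellam_density r 0 \<le> exp (real k ^ 2 / r) * skellam_density r k"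
proof (induction k)
  case (Suc k)
  have "skellam_density r k \<le> exp (real (Suc k) / r) * skellam_density r (Suc k)"
    using skellam_density_le_Suc[OF r, of k] skellam_density_pos[OF r, of "Suc k"]
      exp_ge_add_one_self[of "real (Suc k) / r"]
    by (smt (verit) mult_right_mono)
  then have "skellam_density r 0
      \<le> exp (real k ^ 2 / r) * (exp (real (Suc k) / r) * skellam_density r (Suc k))"
    using Suc.IH by (smt (verit) exp_gt_zero mult_left_mono)
  also have "\<dots> \<le> exp (real (Suc k) ^ 2 / r) * skellam_density r (Suc k)"
  proof -
    have "real k ^ 2 / r + real (Suc k) / r \<le> real (Suc k) ^ 2 / r"
      using r by (simp add: field_simps power2_eq_square)
    then show ?thesis
      using skellam_density_pos[OF r, of "Suc k"]
      by (simp add: mult.assoc[symmetric] mult_exp_exp)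
  qed
  finally show ?case .
qed simp

lemma skellam_density_gap:
  assumes r: "0 < r"
  shows "(1 + real (Suc m) / r) ^ i * skellam_density r (m + 2 * i) \<le> skellam_density r m"
proof (induction i)
  case (Suc i)
  let ?c = "1 + real (Suc m) / r"
  have "?c * skellam_density r (Suc (Suc (m + 2 * i)))
      \<le> (1 + real (Suc (m + 2 * i)) / r) * skellam_density r (Suc (Suc (m + 2 * i)))"
    using r skellam_density_pos[OF r, of "Suc (Suc (m + 2 * i))"]
    by (intro mult_right_mono) (auto simp: divide_right_mono)
  also have "\<dots> \<le> skellam_density r (m + 2 * i)"
    by (rule skellam_density_Suc_Suc_le[OF r])
  finally have "?c ^ i * (?c * skellam_density r (Suc (Suc (m + 2 * i))))
      \<le> ?c ^ i * skellam_density r (m + 2 * i)"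
    using r by (intro mult_left_mono) auto
  then have "?c ^ Suc i * skellam_density r (m + 2 * Suc i)
      \<le> ?c ^ i * skellam_density r (m + 2 * i)"
    by (simp add: mult_ac)
  then show ?case
    using Suc.IH by linarith
qed simp

lemma pmf_skellam_pmf_le_zero:
  "0 < r \<Longrightarrow> pmf (skellam_pmf r) x \<le> skellam_density r 0"
  by (simp add: pmf_skellam_pmf decseqD[OF decseq_skellam_density])

lemma skellam_density_zero_ge:
  assumes r: "0 < r" and n: "2 * r \<le> real n * real n"
  shows "1 \<le> 2 * (8 * real n + 1) * skellam_density r 0"
proof -
  have n_pos: "0 < real n"
    using r n by (cases "n = 0") auto
  define J where "J = {a. \<bar>real a - r\<bar> \<le> 2 * real n}"
  have "measure (poisson_pmf r) (UNIV - J) \<le> r / (2 * real n)\<^sup>2"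
    using measure_poisson_pmf_deviation_le[OF r, of "2 * real n"] n_pos
    by (simp add: J_def set_diff_eq not_le)
  also have "\<dots> \<le> 1 / 8"
    using n n_pos by (simp add: power2_eq_square field_simps)
  finally have "7 / 8 \<le> measure (poisson_pmf r) J"
    using measure_pmf.prob_compl[of J "poisson_pmf r"] by simp
  then have "1 / 2 \<le> measure (poisson_pmf r) J * measure (poisson_pmf r) J"
    using mult_mono[of "7/8" "measure (poisson_pmf r) J" "7/8" "measure (poisson_pmf r) J"]
    by simp
  also have "\<dots> = measure (pair_pmf (poisson_pmf r) (poisson_pmf r)) (J \<times> J)"
    by (rule measure_pmf_prob_product[symmetric]) auto
  also have "\<dots> \<le> measure (skellam_pmf r) {- (4 * int n) .. 4 * int n}"
    unfolding skellam_pmf_def measure_map_pmf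
    by (intro measure_pmf.finite_measure_mono) (auto simp: J_def)
  also have "\<dots> = (\<Sum>x\<in>{- (4 * int n) .. 4 * int n}. pmf (skellam_pmf r) x)"
    by (simp add: measure_measure_pmf_finite)
  also have "\<dots> \<le> (\<Sum>x\<in>{- (4 * int n) .. 4 * int n}. skellam_density r 0)"
    by (intro sum_mono pmf_skellam_pmf_le_zero[OF r])
  also have "\<dots> = (8 * real n + 1) * skellam_density r 0"
    by simp
  finally show ?thesis
    by (simp add: algebra_simps)
qed

section \<open>Variance bounds from separated values\<close>

lemma measure_pmf_variance_ge_separated:
  fixes p :: "'a pmf" and Y :: "'a \<Rightarrow> real"
  assumes Y2: "integrable p (\<lambda>x. (Y x)\<^sup>2)"
    and A: "\<And>x. x \<in> A \<Longrightarrow> \<alpha> \<le> Y x"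
    and B: "\<And>x. x \<in> B \<Longrightarrow> Y x \<le> \<beta>"
    and gap: "\<beta> + g \<le> \<alpha>" "0 \<le> g"
  shows "min (measure p A) (measure p B) * (g / 2)\<^sup>2 \<le> measure_pmf.variance p Y"
proof -
  define m where "m = measure_pmf.expectation p Y"
  have Y: "integrable p Y"
    by (rule measure_pmf.square_integrable_imp_integrable[OF _ Y2]) simp
  have "integrable p (\<lambda>x. (Y x)\<^sup>2 - 2 * m * Y x + m\<^sup>2)"
    using Y2 Y by auto
  then have dev2: "integrable p (\<lambda>x. (Y x - m)\<^sup>2)"
    by (simp add: power2_diff algebra_simps)
  have far: "measure p S * (g / 2)\<^sup>2 \<le> measure_pmf.variance p Y"
    if S: "\<And>x. x \<in> S \<Longrightarrow> g / 2 \<le> \<bar>Y x - m\<bar>" for S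
  proof -
    have "(\<integral>x. (g / 2)\<^sup>2 * indicator S x \<partial>p) \<le> (\<integral>x. (Y x - m)\<^sup>2 \<partial>p)"
    proof (rule integral_mono[OF _ dev2])
      show "integrable p (\<lambda>x. (g / 2)\<^sup>2 * indicator S x)"
        by (intro integrable_mult_right measure_pmf.integrable_const_bound[where B = 1])
          (auto simp: indicator_def)
      show "(g / 2)\<^sup>2 * indicator S x \<le> (Y x - m)\<^sup>2" for x
      proof (cases "x \<in> S")
        case True
        then have "(g / 2)\<^sup>2 \<le> \<bar>Y x - m\<bar>\<^sup>2"
          using S gap(2) by (intro power_mono) auto
        then show ?thesis
          using True by simp
      qed simp
    qed
    then show ?thesis
      by (simp add: m_def mult.commute)
  qed
  show ?thesis
  proof (cases "m \<le> (\<alpha> + \<beta>) / 2")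
    case True
    then have "measure p A * (g / 2)\<^sup>2 \<le> measure_pmf.variance p Y"
      using A gap by (intro far) fastforce
    then show ?thesis
      by (smt (verit) min.cobounded1 mult_right_mono zero_le_power2)
  next
    case False
    then have "measure p B * (g / 2)\<^sup>2 \<le> measure_pmf.variance p Y"
      using B gap by (intro far) fastforce
    then show ?thesis
      by (smt (verit) min.cobounded2 mult_right_mono zero_le_power2)
  qed
qed

lemma varent_ge_separated:
  fixes p :: "'a pmf"
  assumes ln2: "integrable p (\<lambda>x. (ln (pmf p x))\<^sup>2)"
    and A: "\<And>x. x \<in> A \<Longrightarrow> \<alpha> \<le> pmf p x"
    and B: "\<And>x. x \<in> B \<Longrightarrow> pmf p x \<le> \<beta>"
    and \<beta>: "0 < \<beta>" and \<gamma>: "\<gamma> * \<beta> \<le> \<alpha>" "1 \<le> \<gamma>"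
  shows "min (measure p A) (measure p B) * (ln \<gamma> / 2)\<^sup>2 \<le> varent p"
proof -
  have \<alpha>: "0 < \<alpha>"
    using \<beta> \<gamma> by (smt (verit) mult_le_cancel_right1)
  \<comment> \<open>restrict \<open>B\<close> to the support: outside it \<open>ln (pmf p x) = ln 0 = 0\<close> may exceed \<open>ln \<beta>\<close>\<close>
  have "min (measure p A) (measure p (B \<inter> set_pmf p)) * (ln \<gamma> / 2)\<^sup>2 \<le> varent p"
    unfolding varent_def
  proof (rule measure_pmf_variance_ge_separated[OF ln2])
    show "ln \<alpha> \<le> ln (pmf p x)" if "x \<in> A" for x
      using A[OF that] \<alpha> by simp
    show "ln (pmf p x) \<le> ln \<beta>" if "x \<in> B \<inter> set_pmf p" for x
    proof -
      have "0 < pmf p x"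
        using that by (simp add: set_pmf_iff less_le)
      then show ?thesis
        using B[of x] that by simp
    qed
    have "ln (\<beta> * \<gamma>) \<le> ln \<alpha>"
      using \<alpha> \<beta> \<gamma> by (subst ln_le_cancel_iff) (auto simp: mult.commute)
    then show "ln \<beta> + ln \<gamma> \<le> ln \<alpha>"
      using \<beta> \<gamma> by (simp add: ln_mult)
    show "0 \<le> ln \<gamma>"
      using \<gamma> by simp
  qed
  then show ?thesis
    by (simp add: measure_Int_set_pmf)
qed

lemma square_integrable_ln_pmf_skellam_pmf:
  assumes r: "0 < r"
  shows "integrable (skellam_pmf r) (\<lambda>x. (ln (pmf (skellam_pmf r) x))\<^sup>2)"
proof -
  let ?P = "pair_pmf (poisson_pmf r) (poisson_pmf r)"
  define K where "K = r + \<bar>ln r\<bar> + 2"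
  define F where "F x = 2 * K\<^sup>2 * (exp (2 * real (fst x)) + exp (2 * real (snd x)))" for x
  have "integrable (map_pmf fst ?P) (\<lambda>a. exp (2 * real a))"
    and "integrable (map_pmf snd ?P) (\<lambda>a. exp (2 * real a))"
    using integrable_poisson_pmf_exp[OF r, of 2]
    by (simp_all add: map_fst_pair_pmf map_snd_pair_pmf)
  then have F: "integrable ?P F"
    unfolding F_def integrable_map_pmf_eq by auto
  have sq_sum_le: "(x + y)\<^sup>2 \<le> 2 * (x\<^sup>2 + y\<^sup>2)" for x y :: real
    using zero_le_power2[of "x - y"] by (simp add: power2_eq_square algebra_simps)
  have bound: "(ln (pmf (skellam_pmf r) (int a - int b)))\<^sup>2 \<le> F (a, b)" for a b
  proof -
    let ?q = "pmf (skellam_pmf r) (int a - int b)"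
    have pos: "0 < poisson_density r a" "0 < poisson_density r b"
      using poisson_density_pos[OF r] by auto
    have ge: "poisson_density r a * poisson_density r b \<le> ?q"
      by (rule pmf_skellam_pmf_ge[OF r])
    have q_pos: "0 < ?q"
      using pos ge by (smt (verit) mult_pos_pos)
    have "ln (poisson_density r a * poisson_density r b) \<le> ln ?q"
      using pos ge q_pos by simp
    then have "ln (poisson_density r a) + ln (poisson_density r b) \<le> ln ?q"
      using pos by (simp add: ln_mult)
    moreover have "ln ?q \<le> 0"
      using q_pos pmf_le_1[of "skellam_pmf r" "int a - int b"] by simp
    ultimately have "\<bar>ln ?q\<bar> \<le> \<bar>ln (poisson_density r a)\<bar> + \<bar>ln (poisson_density r b)\<bar>"
      by linarith
    also have "\<dots> \<le> K * exp (real a) + K * exp (real b)"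
      unfolding K_def by (intro add_mono abs_ln_poisson_density_le[OF r])
    finally have "(ln ?q)\<^sup>2 \<le> (K * exp (real a) + K * exp (real b))\<^sup>2"
      using power_mono abs_ge_zero power2_abs by metis
    also have "\<dots> \<le> 2 * ((K * exp (real a))\<^sup>2 + (K * exp (real b))\<^sup>2)"
      by (rule sq_sum_le)
    also have "\<dots> = F (a, b)"
      by (simp add: F_def power_mult_distrib algebra_simps flip: exp_of_nat_mult exp_double)
    finally show ?thesis .
  qed
  have "integrable ?P (\<lambda>x. (ln (pmf (skellam_pmf r) (case x of (a, b) \<Rightarrow> int a - int b)))\<^sup>2)"
    by (rule Bochner_Integration.integrable_bound[OF F])
      (use bound in \<open>auto simp: F_def intro!: AE_I2\<close>)
  then show ?thesis
    by (simp add: skellam_pmf_def)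
qed

section \<open>Varentropy of the walk\<close>

lemma varent_skellam_pmf_small:
  assumes r: "0 < r" "r \<le> 1"
  shows "r * exp (- (2 * r)) * (ln (1 / r) / 2)\<^sup>2 \<le> varent (skellam_pmf r)"
proof -
  have pmf0: "pmf (skellam_pmf r) 0 = skellam_density r 0"
    and pmf1: "pmf (skellam_pmf r) 1 = skellam_density r 1"
    using pmf_skellam_pmf[OF r(1)] by simp_all
  have "skellam_density r 1 \<le> r * skellam_density r 0"
    using skellam_density_recurrence[OF r(1), of 0] skellam_density_pos[OF r(1), of 2] r(1)
    by (simp add: numeral_2_eq_2 right_diff_distrib)
  then have "1 / r * skellam_density r 1 \<le> skellam_density r 0"
    using r(1) by (simp add: field_simps)
  then have "min (measure (skellam_pmf r) {0}) (measure (skellam_pmf r) {1}) * (ln (1 / r) / 2)\<^sup>2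
      \<le> varent (skellam_pmf r)"
    using r pmf0 pmf1 skellam_density_pos[OF r(1), of 1]
    by (intro varent_ge_separated[OF square_integrable_ln_pmf_skellam_pmf]) auto
  moreover have "r * exp (- (2 * r)) \<le> measure (skellam_pmf r) {0}"
  proof -
    have "poisson_density r 0 * poisson_density r 0 \<le> pmf (skellam_pmf r) (int 0 - int 0)"
      by (rule pmf_skellam_pmf_ge[OF r(1)])
    then have "exp (- (2 * r)) \<le> measure (skellam_pmf r) {0}"
      by (simp add: measure_pmf_single poisson_density_def mult_exp_exp)
    moreover have "r * exp (- (2 * r)) \<le> exp (- (2 * r))"
      using r by simp
    ultimately show ?thesis
      by linarith
  qed
  moreover have "r * exp (- (2 * r)) \<le> measure (skellam_pmf r) {1}"
  proof -
    have "poisson_density r 1 * poisson_density r 0 \<le> pmf (skellam_pmf r) (int 1 - int 0)"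
      by (rule pmf_skellam_pmf_ge[OF r(1)])
    then show ?thesis
      by (simp add: measure_pmf_single poisson_density_def mult.assoc mult_exp_exp)
  qed
  ultimately show ?thesis
    by (smt (verit) mult_right_mono zero_le_power2)
qed

lemma exists_nat_square_between:
  assumes x: "1 \<le> x"
  obtains n :: nat where "x \<le> real n * real n" "real n * real n \<le> 4 * x"
proof
  define n where "n = nat \<lceil>sqrt x\<rceil>"
  have sqrt_x: "1 \<le> sqrt x"
    using x by simp
  have n_eq: "real n = real_of_int \<lceil>sqrt x\<rceil>"
    using sqrt_x by (simp add: n_def)
  have n_ge: "sqrt x \<le> real n" and n_le: "real n \<le> 2 * sqrt x"
    using n_eq sqrt_x le_of_int_ceiling[of "sqrt x"] of_int_ceiling_le_add_one[of "sqrt x"]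
    by linarith+
  show "x \<le> real n * real n"
    using mult_mono[OF n_ge n_ge] x by simp
  show "real n * real n \<le> 4 * x"
    using mult_mono[OF n_le n_le] x by simp
qed

lemma skellam_density_triple_le:
  assumes r: "0 < r" and n: "2 * r \<le> real n * real n"
  shows "3 * skellam_density r (3 * n) \<le> skellam_density r n"
proof -
  have "0 \<le> real (Suc n) / r"
    using r by simp
  then have "1 + real n * (real (Suc n) / r) \<le> (1 + real (Suc n) / r) ^ n"
    by (intro Bernoulli_inequality) linarith
  moreover have "2 \<le> real n * (real (Suc n) / r)"
    using n r mult_left_mono[of "real n" "real (Suc n)" "real n"] by (simp add: field_simps)
  ultimately have "3 * skellam_density r (n + 2 * n)
      \<le> (1 + real (Suc n) / r) ^ n * skellam_density r (n + 2 * n)"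
    using skellam_density_pos[OF r, of "n + 2 * n"] by (intro mult_right_mono) auto
  also have "\<dots> \<le> skellam_density r n"
    by (rule skellam_density_gap[OF r])
  also have "n + 2 * n = 3 * n"
    by simp
  finally show ?thesis .
qed

lemma measure_skellam_pmf_interval_ge:
  assumes r: "0 < r" and n: "2 * r \<le> real n * real n" "real n * real n \<le> 8 * r"
    and m: "m \<le> 3 * n"
  shows "exp (- 128) / 16 \<le> measure (skellam_pmf r) (int ` {m..m + n})"
proof -
  let ?s = "skellam_density r"
  have window: "exp (- 128) * ?s 0 \<le> ?s k" if "k \<le> 4 * n" for k
  proof -
    have "real k ^ 2 \<le> (4 * real n)\<^sup>2"
      using that by (intro power_mono) auto
    then have "real k ^ 2 / r \<le> 128"
      using n(2) r by (simp add: power2_eq_square field_simps)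
    then have "?s 0 \<le> exp 128 * ?s k"
      using skellam_density_zero_le_exp[OF r, of k] skellam_density_pos[OF r, of k]
      by (smt (verit) exp_le_cancel_iff mult_right_mono)
    then show ?thesis
      by (simp add: exp_minus field_simps)
  qed
  have "1 / 16 \<le> (real n + 1) * ?s 0"
    using skellam_density_zero_ge[OF r n(1)] skellam_density_pos[OF r, of 0]
    by (simp add: field_simps)
  then have "1 / 16 * exp (- 128) \<le> (real n + 1) * ?s 0 * exp (- 128)"
    by (intro mult_right_mono) auto
  then have "exp (- 128) / 16 \<le> (\<Sum>k\<in>{m..m + n}. exp (- 128) * ?s 0)"
    by (simp add: algebra_simps)
  also have "\<dots> \<le> (\<Sum>k\<in>{m..m + n}. ?s k)"
    using window m by (intro sum_mono) simp
  also have "\<dots> = measure (skellam_pmf r) (int ` {m..m + n})"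
    by (simp add: measure_measure_pmf_finite sum.reindex pmf_skellam_pmf_of_nat[OF r])
  finally show ?thesis .
qed

lemma varent_skellam_pmf_large:
  assumes r: "1 / 2 \<le> r"
  shows "exp (- 128) / 16 * (ln 3 / 2)\<^sup>2 \<le> varent (skellam_pmf r)"
proof -
  have r_pos: "0 < r"
    using r by simp
  obtain n where n: "2 * r \<le> real n * real n" "real n * real n \<le> 8 * r"
    using exists_nat_square_between[of "2 * r"] r by auto
  let ?A = "int ` {0..n}" and ?B = "int ` {3 * n..4 * n}"
  have "exp (- 128) / 16 \<le> min (measure (skellam_pmf r) ?A) (measure (skellam_pmf r) ?B)"
    using measure_skellam_pmf_interval_ge[OF r_pos n, of 0]
      measure_skellam_pmf_interval_ge[OF r_pos n, of "3 * n"]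
    by simp
  moreover have "min (measure (skellam_pmf r) ?A) (measure (skellam_pmf r) ?B) * (ln 3 / 2)\<^sup>2
      \<le> varent (skellam_pmf r)"
  proof (rule varent_ge_separated[OF square_integrable_ln_pmf_skellam_pmf[OF r_pos]])
    show "skellam_density r n \<le> pmf (skellam_pmf r) x" if "x \<in> ?A" for x
      using that decseqD[OF decseq_skellam_density[OF r_pos]]
      by (auto simp: pmf_skellam_pmf_of_nat[OF r_pos])
    show "pmf (skellam_pmf r) x \<le> skellam_density r (3 * n)" if "x \<in> ?B" for x
      using that decseqD[OF decseq_skellam_density[OF r_pos]]
      by (auto simp: pmf_skellam_pmf_of_nat[OF r_pos])
  qed (use skellam_density_triple_le[OF r_pos n(1)] skellam_density_pos[OF r_pos] in auto)
  ultimately show ?thesis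
    by (smt (verit) mult_right_mono zero_le_power2)
qed

lemma V_rate_le_small:
  assumes t: "0 < t" "t \<le> 1"
  shows "V_rate t \<le> t * (ln (2 / t))\<^sup>2"
proof -
  define s where "s = sqrt t"
  have s: "0 < s" "s \<le> 1" and t_eq: "t = s * s"
    using t by (simp_all add: s_def)
  have "s * s \<le> s * 1" "s * (s * s) \<le> s * 1"
    using s mult_le_one[of s s] by (intro mult_left_mono; simp)+
  then have "s * s + s * (s * s) \<le> s * 2"
    by linarith
  then have "1 + 1 / s \<le> 2 / (s * s)"
    using s by (simp add: field_simps)
  then have "1 + 1 / sqrt t \<le> 2 / t"
    by (simp add: s_def[symmetric] t_eq[symmetric])
  then have "ln (1 + 1 / sqrt t) \<le> ln (2 / t)"
    using t by (subst ln_le_cancel_iff) (auto intro: add_pos_pos)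
  then have "(ln (1 + 1 / sqrt t))\<^sup>2 \<le> (ln (2 / t))\<^sup>2"
    using t by (intro power_mono) auto
  then show ?thesis
    using t by (simp add: V_rate_def)
qed

lemma V_rate_le_1:
  assumes t: "1 \<le> t"
  shows "V_rate t \<le> 1"
proof -
  have "ln (1 + 1 / sqrt t) \<le> 1 / sqrt t"
    using t by (intro ln_add_one_self_le_self) simp
  then have "(ln (1 + 1 / sqrt t))\<^sup>2 \<le> (1 / sqrt t)\<^sup>2"
    using t by (intro power_mono) auto
  then have "t * (ln (1 + 1 / sqrt t))\<^sup>2 \<le> t * (1 / t)"
    using t by (intro mult_left_mono) (auto simp: power_divide)
  then show ?thesis
    using t by (simp add: V_rate_def)
qed

lemma varent_srw_law_small:
  assumes t: "0 < t" "t \<le> 1"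
  shows "V_rate t / (8 * exp 1) \<le> varent (srw_law t)"
proof -
  have "V_rate t / (8 * exp 1) \<le> t * (ln (2 / t))\<^sup>2 / (8 * exp 1)"
    using V_rate_le_small[OF t] by (simp add: divide_right_mono)
  also have "\<dots> \<le> t / 2 * exp (- (2 * (t / 2))) * (ln (1 / (t / 2)) / 2)\<^sup>2"
    using t by (simp add: exp_minus field_simps power2_eq_square)
  also have "\<dots> \<le> varent (srw_law t)"
    using varent_skellam_pmf_small[of "t / 2"] t by (simp add: srw_law_eq_skellam_pmf)
  finally show ?thesis .
qed

lemma varent_srw_law_large:
  "1 \<le> t \<Longrightarrow> exp (- 128) / 16 * (ln 3 / 2)\<^sup>2 \<le> varent (srw_law t)"
  using varent_skellam_pmf_large[of "t / 2"] by (simp add: srw_law_eq_skellam_pmf)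

theorem lemma5:
  shows "\<exists>c::real. c > 0 \<and> (\<forall>t::real. t \<ge> 0 \<longrightarrow> varent (srw_law t) \<ge> c * V_rate t)"
proof -
  define c :: real where "c = min (1 / (8 * exp 1)) (exp (- 128) / 16 * (ln 3 / 2)\<^sup>2)"
  have "c * V_rate t \<le> varent (srw_law t)" if t: "0 \<le> t" for t
  proof -
    consider "t = 0" | "0 < t" "t \<le> 1" | "1 \<le> t"
      using t by fastforce
    then show ?thesis
    proof cases
      case 1
      then show ?thesis
        by (simp add: V_rate_def varent_def measure_pmf.variance_positive)
    next
      case 2
      then have "c * V_rate t \<le> V_rate t / (8 * exp 1)"
        by (intro mult_right_mono[of c "1 / (8 * exp 1)", simplified]) (auto simp: c_def V_rate_def)
      then show ?thesis
        using varent_srw_law_small[OF 2] by linarith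
    next
      case 3
      then have "c * V_rate t \<le> exp (- 128) / 16 * (ln 3 / 2)\<^sup>2 * 1"
        using V_rate_le_1[OF 3] by (intro mult_mono) (auto simp: c_def V_rate_def)
      then show ?thesis
        using varent_srw_law_large[OF 3] by linarith
    qed
  qed
  moreover have "0 < c"
    by (simp add: c_def)
  ultimately show ?thesis
    by auto
qed

end
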